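(* If $\mathcal I$ is a P-ideal on $\omega$, then $\mathrm{add}_\omega(\mathcal I)=\mathrm{add}^*(\mathcal I)$.
   Context: An ideal on $\omega$ is a family $\mathcal I\subseteq\mathcal P(\omega)$ closed under finite unions and subsets, containing all finite sets, with $\omega\notin\mathcal I$. $\mathcal I$ is a P-ideal if for every countable $\mathcal A\subseteq\mathcal I$ there is $B\in\mathcal I$ with $A\setminus B$ finite for all $A\in\mathcal A$. With the convention $\min\emptyset=\infty$: $\mathrm{add}_\omega(\mathcal I)=\min\{|\mathcal A|:\mathcal A\subseteq\mathcal I$ and for every sequence $(B_n)\in\mathcal I^\omega$ there is $A\in\mathcal A$ with $A\not\subseteq B_n$ for all $n\}$; $\mathrm{add}^*(\mathcal I)=\min\{|\mathcal A|:\mathcal A\subseteq\mathcal I$ and for every $B\in\mathcal I$ there is $A\in\mathcal A$ with $A\setminus B$ infinite$\}$. *)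

theory Defs
  imports "HOL-Library.Countable_Set"
begin

definition is_ideal :: "nat set set \<Rightarrow> bool" where
  "is_ideal I \<longleftrightarrow>
     (\<forall>A\<in>I. \<forall>B\<in>I. A \<union> B \<in> I) \<and>
     (\<forall>A\<in>I. \<forall>B. B \<subseteq> A \<longrightarrow> B \<in> I) \<and>
     (\<forall>F. finite F \<longrightarrow> F \<in> I) \<and>
     UNIV \<notin> I"

definition is_P_ideal :: "nat set set \<Rightarrow> bool" where
  "is_P_ideal I \<longleftrightarrow> is_ideal I \<and>
     (\<forall>\<A>. countable \<A> \<and> \<A> \<subseteq> I \<longrightarrow>
        (\<exists>B\<in>I. \<forall>A\<in>\<A>. finite (A - B)))"

text \<open>Families witnessing add_omega(I): the minimum of their cardinalities is add_omega(I).\<close>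
definition addw_witness :: "nat set set \<Rightarrow> nat set set \<Rightarrow> bool" where
  "addw_witness I \<A> \<longleftrightarrow> \<A> \<subseteq> I \<and>
     (\<forall>B :: nat \<Rightarrow> nat set. (\<forall>n. B n \<in> I) \<longrightarrow>
        (\<exists>A\<in>\<A>. \<forall>n. \<not> A \<subseteq> B n))"

text \<open>Families witnessing add*(I): the minimum of their cardinalities is add*(I).\<close>
definition addstar_witness :: "nat set set \<Rightarrow> nat set set \<Rightarrow> bool" where
  "addstar_witness I \<A> \<longleftrightarrow> \<A> \<subseteq> I \<and>
     (\<forall>B\<in>I. \<exists>A\<in>\<A>. infinite (A - B))"

text \<open>The minimal cardinalities (with min of empty = infinity) agree iff each witness
  of one kind is dominated in cardinality by some witness of the other kind.\<close>
definition same_min_card :: "('a set \<Rightarrow> bool) \<Rightarrow> ('a set \<Rightarrow> bool) \<Rightarrow> bool" where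
  "same_min_card P Q \<longleftrightarrow>
     (\<forall>A. P A \<longrightarrow> (\<exists>B. Q B \<and> (card_of B, card_of A) \<in> ordLeq)) \<and>
     (\<forall>B. Q B \<longrightarrow> (\<exists>A. P A \<and> (card_of A, card_of B) \<in> ordLeq))"

end

theory Submission
  imports Defs
begin

text \<open>The two kinds of witness families coincide: a single \<open>B \<in> I\<close> is replaced by the
  sequence \<open>B \<union> {..<n}\<close>, which swallows every \<open>A\<close> with \<open>A - B\<close> finite; conversely, for a
  P-ideal a sequence \<open>(B\<^sub>n)\<close> is almost contained in a single \<open>B \<in> I\<close>, so an \<open>A\<close> with
  \<open>A - B\<close> infinite lies in no \<open>B\<^sub>n\<close>.\<close>

lemma addw_witness_imp_addstar_witness:
  assumes "is_ideal I" and "addw_witness I \<A>"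
  shows "addstar_witness I \<A>"
  unfolding addstar_witness_def
proof (intro conjI ballI)
  show "\<A> \<subseteq> I" using assms(2) unfolding addw_witness_def by blast
next
  fix B assume "B \<in> I"
  then have "\<forall>n. B \<union> {..<n} \<in> I"
    using assms(1) unfolding is_ideal_def by blast
  then obtain A where A: "A \<in> \<A>" "\<forall>n. \<not> A \<subseteq> B \<union> {..<n}"
    using assms(2) unfolding addw_witness_def
    by (elim conjE allE[where x = "\<lambda>n. B \<union> {..<n}"]) blast
  have "infinite (A - B)"
  proof
    assume "finite (A - B)"
    then obtain n where "A - B \<subseteq> {..<n}"
      using finite_nat_bounded by blast
    with A(2) show False by blast
  qed
  with A(1) show "\<exists>A\<in>\<A>. infinite (A - B)" by blast
qed

lemma addstar_witness_imp_addw_witness: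
  assumes "is_P_ideal I" and "addstar_witness I \<A>"
  shows "addw_witness I \<A>"
  unfolding addw_witness_def
proof (intro conjI allI impI)
  show "\<A> \<subseteq> I" using assms(2) unfolding addstar_witness_def by blast
next
  fix C :: "nat \<Rightarrow> nat set" assume "\<forall>n. C n \<in> I"
  then obtain B where B: "B \<in> I" "\<forall>n. finite (C n - B)"
    using assms(1) unfolding is_P_ideal_def
    by (metis countable_image image_subset_iff rangeI countableI_type)
  then obtain A where A: "A \<in> \<A>" "infinite (A - B)"
    using assms(2) unfolding addstar_witness_def by blast
  have "\<not> A \<subseteq> C n" for n
    using A(2) B(2) finite_subset[of "A - B" "C n - B"] by blast
  with A(1) show "\<exists>A\<in>\<A>. \<forall>n. \<not> A \<subseteq> C n" by blast
qed

lemma addw_witness_eq_addstar_witness: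
  assumes "is_P_ideal I"
  shows "addw_witness I = addstar_witness I"
proof -
  have "is_ideal I" using assms unfolding is_P_ideal_def by blast
  then show ?thesis
    using assms addw_witness_imp_addstar_witness addstar_witness_imp_addw_witness by blast
qed

lemma same_min_card_refl: "same_min_card P P"
  unfolding same_min_card_def using card_of_mono1 by blast

theorem proposition5p7:
  fixes I :: "nat set set"
  assumes "is_P_ideal I"
  shows "same_min_card (addw_witness I) (addstar_witness I)"
  using addw_witness_eq_addstar_witness[OF assms] same_min_card_refl by metis

end
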